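(* In the energy-constrained joint sampling-and-routing problem described in the context, the optimal long-term average AoI $\lambda^\star$ satisfies $$0\le\lambda^\star\le\min_{k\in\mathcal{R}_\infty}\left(\frac{3\mu_k+w_k}{2}+\frac{\sigma_k^2}{2(\mu_k+w_k)}\right),\qquad w_k=\left(\frac{C_s+G_k\mu_k}{E_{\max}}-\mu_k\right)^+.$$
   Context: Routes and availability. There are $N$ routes. Route $k$ is available at each epoch independently with probability $p_k\in(0,1]$, and the set $\mathcal{R}_\infty=\{k:p_k=1\}$ of always-available routes is nonempty. Delays. Transmission delays are nonnegative and i.i.d. across epochs (possibly correlated across routes within an epoch). Route $k$ has delay distribution $Q_k$ with finite mean $\mu_k>0$ and finite variance $\sigma_k^2$. Operation. The system is generate-at-will and non-preemptive. After each delivery $D_i$, the controller picks an available route $R_i$ and a finite waiting time $Z_i\ge0$. The next sample is generated at $S_{i+1}=D_i+Z_i$ and delivered at $D_{i+1}=S_{i+1}+Y_{i+1,R_i}$. AoI. The AoI is $\Delta(t)=t-S_i$ for $D_i\le t<D_{i+1}$. Energy. Each sample costs $C_s>0$, and route $k$ costs $G_k\ge0$ per unit of transmission time. Hence update $i+1$ costs $E_{i+1}=C_s+G_{R_i}Y_{i+1,R_i}$. Optimization problem. $\lambda^\star$ is the minimum over causal stationary policies of $\limsup_{T\to\infty}\frac1T\mathbb{E}[\int_0^T\Delta(t)dt]$, subject to $\limsup_n \mathbb{E}[\sum_{i<n}E_{i+1}]/\mathbb{E}[\sum_{i<n}(Z_i+Y_{i+1,R_i})]\le E_{\max}$, where $E_{\max}>0$.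 *)

theory Defs
  imports "HOL-Probability.Probability"
begin

(* Model conventions:
   - routes: a finite type 'r;  per-epoch randomness: an outcome of type 'e drawn from M0;
     the whole sample path is a stream of i.i.d. epoch outcomes, measure  stream_space M0.
   - epoch j outcome e gives the availability vector  A e :: 'r => bool  (availability at the
     decision made after delivery D_j) and the delay vector  Y e :: 'r => real  (delays of the
     transmission delivered at D_j, i.e. Y_{j,k}).
   - a (deterministic) stationary policy maps the current state
       (Delta(D_i) = Y_i, availability vector at epoch i)  to  (route R_i, waiting time Z_i).
   - initial condition: S_0 = D_0 = 0 (so Y_0 = 0). *)

type_synonym ('r) policy = "real \<Rightarrow> ('r \<Rightarrow> bool) \<Rightarrow> 'r \<times> real"

text \<open>Y_i: the delay of the i-th update, i.e. the AoI right after delivery D_i.\<close>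
fun lastdelay :: "'r policy \<Rightarrow> ('e \<Rightarrow> 'r \<Rightarrow> bool) \<Rightarrow> ('e \<Rightarrow> 'r \<Rightarrow> real)
                   \<Rightarrow> 'e stream \<Rightarrow> nat \<Rightarrow> real" where
  "lastdelay \<pi> A Y \<omega> 0 = 0"
| "lastdelay \<pi> A Y \<omega> (Suc i) =
     Y (\<omega> !! Suc i) (fst (\<pi> (lastdelay \<pi> A Y \<omega> i) (A (\<omega> !! i))))"

definition route :: "'r policy \<Rightarrow> ('e \<Rightarrow> 'r \<Rightarrow> bool) \<Rightarrow> ('e \<Rightarrow> 'r \<Rightarrow> real)
                   \<Rightarrow> 'e stream \<Rightarrow> nat \<Rightarrow> 'r" where
  "route \<pi> A Y \<omega> i = fst (\<pi> (lastdelay \<pi> A Y \<omega> i) (A (\<omega> !! i)))"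

definition wait :: "'r policy \<Rightarrow> ('e \<Rightarrow> 'r \<Rightarrow> bool) \<Rightarrow> ('e \<Rightarrow> 'r \<Rightarrow> real)
                   \<Rightarrow> 'e stream \<Rightarrow> nat \<Rightarrow> real" where
  "wait \<pi> A Y \<omega> i = snd (\<pi> (lastdelay \<pi> A Y \<omega> i) (A (\<omega> !! i)))"

fun deliv :: "'r policy \<Rightarrow> ('e \<Rightarrow> 'r \<Rightarrow> bool) \<Rightarrow> ('e \<Rightarrow> 'r \<Rightarrow> real)
                   \<Rightarrow> 'e stream \<Rightarrow> nat \<Rightarrow> real" where
  "deliv \<pi> A Y \<omega> 0 = 0"
| "deliv \<pi> A Y \<omega> (Suc i) = deliv \<pi> A Y \<omega> i + wait \<pi> A Y \<omega> i + lastdelay \<pi> A Y \<omega> (Suc i)"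

fun samp :: "'r policy \<Rightarrow> ('e \<Rightarrow> 'r \<Rightarrow> bool) \<Rightarrow> ('e \<Rightarrow> 'r \<Rightarrow> real)
                   \<Rightarrow> 'e stream \<Rightarrow> nat \<Rightarrow> real" where
  "samp \<pi> A Y \<omega> 0 = 0"
| "samp \<pi> A Y \<omega> (Suc i) = deliv \<pi> A Y \<omega> i + wait \<pi> A Y \<omega> i"

definition aoi :: "'r policy \<Rightarrow> ('e \<Rightarrow> 'r \<Rightarrow> bool) \<Rightarrow> ('e \<Rightarrow> 'r \<Rightarrow> real)
                   \<Rightarrow> 'e stream \<Rightarrow> real \<Rightarrow> ennreal" where
  "aoi \<pi> A Y \<omega> t = (\<Sum>i. indicator {deliv \<pi> A Y \<omega> i ..< deliv \<pi> A Y \<omega> (Suc i)} t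
                           * ennreal (t - samp \<pi> A Y \<omega> i))"

definition admissible :: "'r policy \<Rightarrow> bool" where
  "admissible \<pi> \<longleftrightarrow>
     (\<forall>y a. (\<exists>k. a k) \<longrightarrow> a (fst (\<pi> y a))) \<and>
     (\<forall>y a. snd (\<pi> y a) \<ge> 0) \<and>
     (\<forall>a. (\<lambda>y. fst (\<pi> y a)) \<in> measurable borel (count_space UNIV)) \<and>
     (\<forall>a. (\<lambda>y. snd (\<pi> y a)) \<in> borel_measurable borel)"

definition avg_aoi :: "'e measure \<Rightarrow> ('e \<Rightarrow> 'r \<Rightarrow> bool) \<Rightarrow> ('e \<Rightarrow> 'r \<Rightarrow> real)
                       \<Rightarrow> 'r policy \<Rightarrow> ennreal" where
  "avg_aoi M0 A Y \<pi> = Limsup at_top (\<lambda>T::real.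
      (\<integral>\<^sup>+ \<omega>. (\<integral>\<^sup>+ t. indicator {0..T} t * aoi \<pi> A Y \<omega> t \<partial>lborel) \<partial>stream_space M0)
        / ennreal T)"

definition avg_power :: "'e measure \<Rightarrow> ('e \<Rightarrow> 'r \<Rightarrow> bool) \<Rightarrow> ('e \<Rightarrow> 'r \<Rightarrow> real)
                       \<Rightarrow> real \<Rightarrow> ('r \<Rightarrow> real) \<Rightarrow> 'r policy \<Rightarrow> ennreal" where
  "avg_power M0 A Y Cs G \<pi> = limsup (\<lambda>n.
      (\<integral>\<^sup>+ \<omega>. (\<Sum>i<n. ennreal (Cs + G (route \<pi> A Y \<omega> i) * lastdelay \<pi> A Y \<omega> (Suc i)))
           \<partial>stream_space M0)
      / (\<integral>\<^sup>+ \<omega>. (\<Sum>i<n. ennreal (wait \<pi> A Y \<omega> i + lastdelay \<pi> A Y \<omega> (Suc i)))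
           \<partial>stream_space M0))"

definition opt_aoi :: "'e measure \<Rightarrow> ('e \<Rightarrow> 'r \<Rightarrow> bool) \<Rightarrow> ('e \<Rightarrow> 'r \<Rightarrow> real)
                       \<Rightarrow> real \<Rightarrow> ('r \<Rightarrow> real) \<Rightarrow> real \<Rightarrow> ennreal" where
  "opt_aoi M0 A Y Cs G Emax =
     (INF \<pi> \<in> {\<pi>. admissible \<pi> \<and> avg_power M0 A Y Cs G \<pi> \<le> ennreal Emax}. avg_aoi M0 A Y \<pi>)"

end

theory Submission
  imports Defs
begin

(* Fix an always-available route k and a waiting time w > w_k, and use route k with waiting
   time w at every epoch. This stationary policy is admissible and its average power is
   (C_s + G_k mu_k) / (w + mu_k) <= E_max. Under it the delivery times form a renewal process
   with i.i.d. gaps X = w + Y, and the AoI area of cycle i is the trapezoid Y_i X_i + X_i^2 / 2.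
   Since the i-th epoch is independent of the next delay, the expected area up to time T is at
   most U(T) (mu E[X] + E[X^2] / 2), where U(T) is the expected number of epochs in [0, T]; a
   Wald-type argument bounds U(T) E[X] by T plus one overshooting gap, whence
   limsup U(T) / T <= 1 / E[X]. The average AoI is therefore at most
   mu + E[X^2] / (2 E[X]) = (3 mu + w) / 2 + sigma^2 / (2 (mu + w)). Letting w decrease to w_k
   and minimising over k gives the bound. *)

section \<open>Independent coordinates of an i.i.d. stream\<close>

lemma (in prob_space) nn_integral_stream_space_indep_snth:
  fixes f :: "'a stream \<Rightarrow> ennreal" and h :: "'a \<Rightarrow> ennreal"
  assumes f: "f \<in> borel_measurable (stream_space M)"
    and f_prefix: "\<And>\<omega> \<omega>'. (\<forall>j<n. \<omega> !! j = \<omega>' !! j) \<Longrightarrow> f \<omega> = f \<omega>'"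
    and h[measurable]: "h \<in> borel_measurable M"
  shows "(\<integral>\<^sup>+\<omega>. f \<omega> * h (\<omega> !! n) \<partial>stream_space M) = (\<integral>\<^sup>+\<omega>. f \<omega> \<partial>stream_space M) * (\<integral>\<^sup>+x. h x \<partial>M)"
  using f f_prefix
proof (induction n arbitrary: f)
  case 0
  interpret S: prob_space "stream_space M" by (rule prob_space_stream_space)
  have f_const: "f \<omega> = f undefined" for \<omega> using 0(2) by auto
  have "(\<integral>\<^sup>+\<omega>. f \<omega> * h (\<omega> !! 0) \<partial>stream_space M) = f undefined * (\<integral>\<^sup>+\<omega>. h (\<omega> !! 0) \<partial>stream_space M)"
    by (subst f_const) (rule nn_integral_cmult, measurable)
  also have "(\<integral>\<^sup>+\<omega>. h (\<omega> !! 0) \<partial>stream_space M) = (\<integral>\<^sup>+x. h x \<partial>M)"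
    by (subst nn_integral_stream_space) (auto simp: S.emeasure_space_1)
  also have "f undefined = (\<integral>\<^sup>+\<omega>. f \<omega> \<partial>stream_space M)"
    by (subst f_const) (simp add: S.emeasure_space_1)
  finally show ?case .
next
  case (Suc n)
  interpret S: prob_space "stream_space M" by (rule prob_space_stream_space)
  note [measurable] = Suc.prems(1)
  have "(\<integral>\<^sup>+\<omega>. f \<omega> * h (\<omega> !! Suc n) \<partial>stream_space M)
      = (\<integral>\<^sup>+x. (\<integral>\<^sup>+\<omega>. f (x ## \<omega>) * h (\<omega> !! n) \<partial>stream_space M) \<partial>M)"
    by (subst nn_integral_stream_space) auto
  also have "\<dots> = (\<integral>\<^sup>+x. (\<integral>\<^sup>+\<omega>. f (x ## \<omega>) \<partial>stream_space M) * (\<integral>\<^sup>+x. h x \<partial>M) \<partial>M)"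
  proof (rule nn_integral_cong)
    fix x assume x: "x \<in> space M"
    show "(\<integral>\<^sup>+\<omega>. f (x ## \<omega>) * h (\<omega> !! n) \<partial>stream_space M)
        = (\<integral>\<^sup>+\<omega>. f (x ## \<omega>) \<partial>stream_space M) * (\<integral>\<^sup>+x. h x \<partial>M)"
    proof (rule Suc.IH)
      show "(\<lambda>\<omega>. f (x ## \<omega>)) \<in> borel_measurable (stream_space M)" using x by measurable
      fix \<omega> \<omega>' :: "'a stream" assume "\<forall>j<n. \<omega> !! j = \<omega>' !! j"
      then have "\<forall>j<Suc n. (x ## \<omega>) !! j = (x ## \<omega>') !! j" by (auto simp: Stream_snth split: nat.split)
      then show "f (x ## \<omega>) = f (x ## \<omega>')" by (rule Suc.prems(2))
    qed
  qed
  also have "\<dots> = (\<integral>\<^sup>+x. (\<integral>\<^sup>+\<omega>. f (x ## \<omega>) \<partial>stream_space M) \<partial>M) * (\<integral>\<^sup>+x. h x \<partial>M)"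
    by (rule nn_integral_multc) (rule S.borel_measurable_nn_integral, measurable)
  also have "(\<integral>\<^sup>+x. (\<integral>\<^sup>+\<omega>. f (x ## \<omega>) \<partial>stream_space M) \<partial>M) = (\<integral>\<^sup>+\<omega>. f \<omega> \<partial>stream_space M)"
    by (subst nn_integral_stream_space) auto
  finally show ?case .
qed

lemma (in prob_space) nn_integral_stream_space_snth:
  fixes h :: "'a \<Rightarrow> ennreal"
  assumes "h \<in> borel_measurable M"
  shows "(\<integral>\<^sup>+\<omega>. h (\<omega> !! n) \<partial>stream_space M) = (\<integral>\<^sup>+x. h x \<partial>M)"
  using nn_integral_stream_space_indep_snth[of "\<lambda>_. 1" n h] assms
  by (simp add: prob_space.emeasure_space_1[OF prob_space_stream_space])

lemma (in prob_space) nn_integral_stream_space_sum_snth: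
  fixes h :: "'a \<Rightarrow> ennreal"
  assumes "h \<in> borel_measurable M"
  shows "(\<integral>\<^sup>+\<omega>. (\<Sum>i<n. h (\<omega> !! Suc i)) \<partial>stream_space M) = of_nat n * (\<integral>\<^sup>+x. h x \<partial>M)"
  using assms by (simp add: nn_integral_sum nn_integral_stream_space_snth del: snth.simps)

section \<open>Deterministic estimates\<close>

lemma of_nat_mult_ennreal_divide_le:
  assumes "0 \<le> a" "0 < b"
  shows "of_nat n * ennreal a / (of_nat n * ennreal b) \<le> ennreal (a / b)"
proof (cases "n = 0")
  case False
  then have "of_nat n * ennreal a / (of_nat n * ennreal b) = ennreal a / ennreal b"
    by (simp add: mult.commute[of "of_nat n"] divide_mult_eq)
  also have "\<dots> = ennreal (a / b)"
    using assms by (rule divide_ennreal)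
  finally show ?thesis by simp
qed simp

lemma nn_integral_ramp:
  fixes a b c :: real
  assumes "c \<le> a" "a \<le> b"
  shows "(\<integral>\<^sup>+t. indicator {a..<b} t * ennreal (t - c) \<partial>lborel) = ennreal (((b - c)\<^sup>2 - (a - c)\<^sup>2) / 2)"
proof -
  have "(\<integral>\<^sup>+t. indicator {a..<b} t * ennreal (t - c) \<partial>lborel)
      = (\<integral>\<^sup>+t. ennreal (t - c) * indicator {a..b} t \<partial>lborel)"
  proof (rule nn_integral_cong_AE)
    show "AE t in lborel. indicator {a..<b} t * ennreal (t - c) = ennreal (t - c) * indicator {a..b} t"
      using AE_lborel_singleton[of b] by eventually_elim (auto split: split_indicator)
  qed
  also have "\<dots> = ennreal ((b - c)\<^sup>2 / 2 - (a - c)\<^sup>2 / 2)"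
    by (rule nn_integral_FTC_Icc[where F="\<lambda>t. (t - c)\<^sup>2 / 2"])
       (use assms in \<open>auto intro!: derivative_eq_intros\<close>)
  finally show ?thesis by (simp add: diff_divide_distrib)
qed
lemma nn_integral_sawtooth_le:
  fixes d s :: "nat \<Rightarrow> real" and T :: real
  assumes s_le_d: "\<And>i. s i \<le> d i" and d_mono: "\<And>i. d i \<le> d (Suc i)"
  shows "(\<integral>\<^sup>+t. indicator {0..T} t * (\<Sum>i. indicator {d i..<d (Suc i)} t * ennreal (t - s i)) \<partial>lborel)
     \<le> (\<Sum>i. if d i \<le> T then ennreal (((d (Suc i) - s i)\<^sup>2 - (d i - s i)\<^sup>2) / 2) else 0)"
proof -
  have "(\<integral>\<^sup>+t. indicator {0..T} t * (\<Sum>i. indicator {d i..<d (Suc i)} t * ennreal (t - s i)) \<partial>lborel)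
     = (\<Sum>i. \<integral>\<^sup>+t. indicator {0..T} t * (indicator {d i..<d (Suc i)} t * ennreal (t - s i)) \<partial>lborel)"
    by (simp only: ennreal_suminf_cmult[symmetric]) (rule nn_integral_suminf, measurable)
  also have "\<dots> \<le> (\<Sum>i. if d i \<le> T then ennreal (((d (Suc i) - s i)\<^sup>2 - (d i - s i)\<^sup>2) / 2) else 0)"
  proof (rule suminf_le)
    fix i
    show "(\<integral>\<^sup>+t. indicator {0..T} t * (indicator {d i..<d (Suc i)} t * ennreal (t - s i)) \<partial>lborel)
        \<le> (if d i \<le> T then ennreal (((d (Suc i) - s i)\<^sup>2 - (d i - s i)\<^sup>2) / 2) else 0)"
    proof (cases "d i \<le> T")
      case True
      have "(\<integral>\<^sup>+t. indicator {0..T} t * (indicator {d i..<d (Suc i)} t * ennreal (t - s i)) \<partial>lborel)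
          \<le> (\<integral>\<^sup>+t. indicator {d i..<d (Suc i)} t * ennreal (t - s i) \<partial>lborel)"
        by (intro nn_integral_mono) (auto split: split_indicator)
      also have "\<dots> = ennreal (((d (Suc i) - s i)\<^sup>2 - (d i - s i)\<^sup>2) / 2)"
        using s_le_d d_mono by (intro nn_integral_ramp) auto
      finally show ?thesis using True by simp
    next
      case False
      then have "(\<lambda>t. indicator {0..T} t * (indicator {d i..<d (Suc i)} t * ennreal (t - s i))) = (\<lambda>t. 0::ennreal)"
        by (auto split: split_indicator)
      then show ?thesis using False by (simp del: mult_eq_0_iff)
    qed
  qed auto
  finally show ?thesis .
qed

lemma sum_until_passage_le:
  fixes X :: "nat \<Rightarrow> real" and T \<epsilon> :: real
  assumes X_nonneg: "\<And>j. 0 \<le> X j" and T: "0 \<le> T" and \<epsilon>: "0 < \<epsilon>"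
  shows "(\<Sum>i<n. if (\<Sum>j<i. X j) \<le> T then X i else 0)
      \<le> T + \<epsilon> * (\<Sum>i<n. if (\<Sum>j<i. X j) \<le> T then (X i)\<^sup>2 else 0) + 1 / (4 * \<epsilon>)"
proof -
  define D where "D i = (\<Sum>j<i. X j)" for i
  define S where "S n = (\<Sum>i<n. if D i \<le> T then X i else 0)" for n
  define Q where "Q n = (\<Sum>i<n. if D i \<le> T then (X i)\<^sup>2 else 0)" for n
  have Q_nonneg: "0 \<le> Q n" for n unfolding Q_def by (intro sum_nonneg) auto
  \<comment> \<open>AM-GM: the single overshooting term is paid for by its square.\<close>
  have overshoot: "X i \<le> \<epsilon> * (X i)\<^sup>2 + 1 / (4 * \<epsilon>)" for i
  proof -
    have "0 \<le> (2 * \<epsilon> * X i - 1)\<^sup>2" by simp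
    then have "4 * \<epsilon> * X i \<le> 4 * \<epsilon> * (\<epsilon> * (X i)\<^sup>2 + 1 / (4 * \<epsilon>))"
      using \<epsilon> by (simp add: power2_eq_square algebra_simps)
    then show ?thesis using \<epsilon> by simp
  qed
  have "(D n \<le> T \<longrightarrow> S n = D n) \<and> S n \<le> T + \<epsilon> * Q n + (if D n \<le> T then 0 else 1 / (4 * \<epsilon>))"
  proof (induction n)
    case 0
    then show ?case using T by (simp add: S_def Q_def D_def)
  next
    case (Suc n)
    have S_Suc: "S (Suc n) = S n + (if D n \<le> T then X n else 0)" by (simp add: S_def)
    have Q_Suc: "Q (Suc n) = Q n + (if D n \<le> T then (X n)\<^sup>2 else 0)" by (simp add: Q_def)
    have D_Suc: "D (Suc n) = D n + X n" by (simp add: D_def)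
    show ?case
    proof (cases "D n \<le> T")
      case True
      then have S_n: "S n = D n" using Suc.IH by auto
      show ?thesis
      proof (cases "D (Suc n) \<le> T")
        case True
        moreover have "0 \<le> \<epsilon> * Q (Suc n)" using Q_nonneg[of "Suc n"] \<epsilon> by simp
        ultimately show ?thesis using \<open>D n \<le> T\<close> S_n S_Suc D_Suc by auto
      next
        case False
        have "S (Suc n) = D n + X n" using S_Suc S_n True by simp
        also have "\<dots> \<le> T + \<epsilon> * (X n)\<^sup>2 + 1 / (4 * \<epsilon>)" using True overshoot[of n] by linarith
        also have "\<epsilon> * (X n)\<^sup>2 \<le> \<epsilon> * Q (Suc n)" using Q_Suc True Q_nonneg[of n] \<epsilon> by auto
        finally show ?thesis using False by auto
      qed
    next
      case False
      then have "\<not> D (Suc n) \<le> T" using D_Suc X_nonneg[of n] by auto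
      then show ?thesis using False Suc.IH S_Suc Q_Suc by auto
    qed
  qed
  moreover have "(if D n \<le> T then 0 else 1 / (4 * \<epsilon>)) \<le> 1 / (4 * \<epsilon>)"
    using \<epsilon> by simp
  ultimately have "S n \<le> T + \<epsilon> * Q n + 1 / (4 * \<epsilon>)"
    by linarith
  then show ?thesis unfolding S_def Q_def D_def .
qed

lemma sum_lessThan_le_shifted:
  fixes x b :: "nat \<Rightarrow> 'a::ordered_comm_monoid_add"
  assumes "x 0 \<le> 0" "\<And>j. x (Suc j) \<le> b j" "\<And>j. 0 \<le> b j"
  shows "(\<Sum>i<n. x i) \<le> (\<Sum>i<n. b i)"
proof (cases n)
  case (Suc m)
  have "(\<Sum>i<n. x i) = x 0 + (\<Sum>i<m. x (Suc i))" unfolding Suc by (rule sum.lessThan_Suc_shift)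
  also have "\<dots> \<le> 0 + (\<Sum>i<m. b i)" using assms by (intro add_mono sum_mono) auto
  also have "\<dots> \<le> (\<Sum>i<n. b i)" unfolding Suc using assms(3) by (simp add: add_increasing2)
  finally show ?thesis .
qed simp

lemma ennreal_le_of_continuous_from_right:
  fixes f :: "real \<Rightarrow> real" and x :: ennreal
  assumes "isCont f a" and "\<And>w. a < w \<Longrightarrow> x \<le> ennreal (f w)"
  shows "x \<le> ennreal (f a)"
proof (rule tendsto_lowerbound)
  have "(f \<longlongrightarrow> f a) (at_right a)"
    using assms(1) unfolding isCont_def by (rule tendsto_mono[OF at_le, rotated]) simp
  then show "((\<lambda>w. ennreal (f w)) \<longlongrightarrow> ennreal (f a)) (at_right a)"
    by (rule tendsto_ennrealI)
  show "\<forall>\<^sub>F w in at_right a. x \<le> ennreal (f w)"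
    using eventually_at_right_less[of a] by eventually_elim (rule assms(2))
qed (rule trivial_limit_at_right_real)

section \<open>A renewal process with constant waiting time\<close>

locale wait_renewal = prob_space M for M :: "'e measure" +
  fixes Y :: "'e \<Rightarrow> real" and w \<mu> s :: real
  assumes Y_measurable[measurable]: "Y \<in> borel_measurable M"
    and Y_nonneg: "\<And>e. 0 \<le> Y e"
    and w_pos: "0 < w" and \<mu>_nonneg: "0 \<le> \<mu>" and s_nonneg: "0 \<le> s"
    and nn_integral_Y: "(\<integral>\<^sup>+e. ennreal (Y e) \<partial>M) = ennreal \<mu>"
    and nn_integral_gap_sq: "(\<integral>\<^sup>+e. ennreal ((w + Y e)\<^sup>2) \<partial>M) = ennreal s"
begin

(* epoch i is the delivery time D_i, age i the delay Y_i of update i (with Y_0 = 0), and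
   gap i = D_(i+1) - D_i = w + Y_(i+1). *)

definition gap :: "nat \<Rightarrow> 'e stream \<Rightarrow> real" where
  "gap j \<omega> = w + Y (\<omega> !! Suc j)"

definition epoch :: "nat \<Rightarrow> 'e stream \<Rightarrow> real" where
  "epoch i \<omega> = (\<Sum>j<i. gap j \<omega>)"

definition age :: "nat \<Rightarrow> 'e stream \<Rightarrow> real" where
  "age i \<omega> = (case i of 0 \<Rightarrow> 0 | Suc j \<Rightarrow> Y (\<omega> !! Suc j))"

definition epoch_le :: "real \<Rightarrow> nat \<Rightarrow> 'e stream \<Rightarrow> ennreal" where
  "epoch_le T i \<omega> = (if epoch i \<omega> \<le> T then 1 else 0)"

(* renewal_count T is the expected number of epochs in [0, T]: all gaps are at least w, so no
   epoch from horizon T on lies in [0, T]. *)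

definition horizon :: "real \<Rightarrow> nat" where
  "horizon T = nat \<lceil>T / w\<rceil> + 1"

definition renewal_count :: "real \<Rightarrow> ennreal" where
  "renewal_count T = (\<Sum>i<horizon T. \<integral>\<^sup>+\<omega>. epoch_le T i \<omega> \<partial>stream_space M)"

lemma gap_measurable[measurable]: "gap j \<in> borel_measurable (stream_space M)"
  unfolding gap_def by measurable

lemma epoch_measurable[measurable]: "epoch i \<in> borel_measurable (stream_space M)"
  unfolding epoch_def by measurable

lemma age_measurable[measurable]: "age i \<in> borel_measurable (stream_space M)"
  unfolding age_def by (cases i) simp_all

lemma epoch_le_measurable[measurable]: "epoch_le T i \<in> borel_measurable (stream_space M)"
  unfolding epoch_le_def by measurable

lemma gap_nonneg: "0 \<le> gap j \<omega>"
  unfolding gap_def using Y_nonneg w_pos by (simp add: add_nonneg_nonneg)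

lemma age_nonneg: "0 \<le> age i \<omega>"
  unfolding age_def using Y_nonneg by (cases i) auto

lemma epoch_Suc: "epoch (Suc i) \<omega> = epoch i \<omega> + gap i \<omega>"
  unfolding epoch_def by simp

lemma epoch_mono: "epoch i \<omega> \<le> epoch (Suc i) \<omega>"
  using gap_nonneg[of i \<omega>] by (simp add: epoch_Suc)

lemma epoch_ge: "real i * w \<le> epoch i \<omega>"
proof -
  have "(\<Sum>j<i. w) \<le> epoch i \<omega>"
    unfolding epoch_def gap_def using Y_nonneg by (intro sum_mono) auto
  then show ?thesis by simp
qed

lemma epoch_le_beyond_horizon:
  assumes "horizon T \<le> i"
  shows "epoch_le T i \<omega> = 0"
proof -
  have "T < real i * w"
  proof (cases "0 \<le> T")
    case True
    have "T / w \<le> real (nat \<lceil>T / w\<rceil>)" by linarith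
    also have "\<dots> < real i" using assms unfolding horizon_def by simp
    finally show ?thesis using w_pos by (simp add: field_simps)
  qed (use w_pos in \<open>simp add: not_le less_le_trans[OF _ mult_nonneg_nonneg]\<close>)
  then show ?thesis using epoch_ge[of i \<omega>] unfolding epoch_le_def by auto
qed

lemma epoch_le_antimono: "epoch_le T (Suc i) \<omega> \<le> epoch_le T i \<omega>"
  unfolding epoch_le_def using epoch_mono[of i \<omega>] by auto

lemma epoch_le_mult: "epoch_le T i \<omega> * ennreal r = ennreal (if epoch i \<omega> \<le> T then r else 0)"
  unfolding epoch_le_def by auto

(* Epoch i depends only on the first i + 1 samples, so it is independent of sample i + 1. *)

lemma nn_integral_epoch_le_indep:
  assumes f: "f \<in> borel_measurable (stream_space M)"
    and f_prefix: "\<And>\<omega> \<omega>'. (\<forall>j<Suc i. \<omega> !! j = \<omega>' !! j) \<Longrightarrow> f \<omega> = f \<omega>'"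
    and h: "h \<in> borel_measurable M"
  shows "(\<integral>\<^sup>+\<omega>. epoch_le T i \<omega> * f \<omega> * h (\<omega> !! Suc i) \<partial>stream_space M)
       = (\<integral>\<^sup>+\<omega>. epoch_le T i \<omega> * f \<omega> \<partial>stream_space M) * (\<integral>\<^sup>+x. h x \<partial>M)"
proof (rule nn_integral_stream_space_indep_snth[OF _ _ h])
  show "(\<lambda>\<omega>. epoch_le T i \<omega> * f \<omega>) \<in> borel_measurable (stream_space M)" using f by measurable
  fix \<omega> \<omega>' :: "'e stream" assume same: "\<forall>j<Suc i. \<omega> !! j = \<omega>' !! j"
  then have "epoch i \<omega> = epoch i \<omega>'"
    unfolding epoch_def gap_def by (intro sum.cong) auto
  then show "epoch_le T i \<omega> * f \<omega> = epoch_le T i \<omega>' * f \<omega>'"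
    using f_prefix[OF same] by (simp add: epoch_le_def)
qed

lemma nn_integral_gap: "(\<integral>\<^sup>+e. ennreal (w + Y e) \<partial>M) = ennreal (w + \<mu>)"
proof -
  have "(\<integral>\<^sup>+e. ennreal (w + Y e) \<partial>M) = (\<integral>\<^sup>+e. ennreal w + ennreal (Y e) \<partial>M)"
    using w_pos Y_nonneg by (intro nn_integral_cong) (simp add: ennreal_plus)
  also have "\<dots> = ennreal w + ennreal \<mu>"
    by (subst nn_integral_add) (auto simp: nn_integral_Y emeasure_space_1)
  finally show ?thesis using w_pos \<mu>_nonneg by (simp add: ennreal_plus)
qed

lemma nn_integral_gap_sq_half: "(\<integral>\<^sup>+e. ennreal ((w + Y e)\<^sup>2 / 2) \<partial>M) = ennreal (s / 2)"
  using nn_integral_divide[of "\<lambda>e. ennreal ((w + Y e)\<^sup>2)" M 2] s_nonneg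
  by (simp add: ennreal_divide_numeral nn_integral_gap_sq)

lemma age_prefix: "\<forall>j<Suc i. \<omega> !! j = \<omega>' !! j \<Longrightarrow> age i \<omega> = age i \<omega>'"
  unfolding age_def by (cases i) auto

lemma nn_integral_epoch_le_area:
  "(\<integral>\<^sup>+\<omega>. epoch_le T i \<omega> * ennreal (age i \<omega> * gap i \<omega> + (gap i \<omega>)\<^sup>2 / 2) \<partial>stream_space M)
    = (\<integral>\<^sup>+\<omega>. epoch_le T i \<omega> * ennreal (age i \<omega>) \<partial>stream_space M) * ennreal (w + \<mu>)
      + (\<integral>\<^sup>+\<omega>. epoch_le T i \<omega> \<partial>stream_space M) * ennreal (s / 2)"
proof -
  have "(\<integral>\<^sup>+\<omega>. epoch_le T i \<omega> * ennreal (age i \<omega> * gap i \<omega> + (gap i \<omega>)\<^sup>2 / 2) \<partial>stream_space M)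
    = (\<integral>\<^sup>+\<omega>. epoch_le T i \<omega> * ennreal (age i \<omega>) * ennreal (w + Y (\<omega> !! Suc i))
         + epoch_le T i \<omega> * 1 * ennreal ((w + Y (\<omega> !! Suc i))\<^sup>2 / 2) \<partial>stream_space M)"
  proof (intro nn_integral_cong)
    fix \<omega>
    have "ennreal (age i \<omega> * gap i \<omega> + (gap i \<omega>)\<^sup>2 / 2)
        = ennreal (age i \<omega>) * ennreal (gap i \<omega>) + ennreal ((gap i \<omega>)\<^sup>2 / 2)"
      using age_nonneg[of i \<omega>] gap_nonneg[of i \<omega>] by (simp add: ennreal_plus ennreal_mult)
    then show "epoch_le T i \<omega> * ennreal (age i \<omega> * gap i \<omega> + (gap i \<omega>)\<^sup>2 / 2)
        = epoch_le T i \<omega> * ennreal (age i \<omega>) * ennreal (w + Y (\<omega> !! Suc i))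
          + epoch_le T i \<omega> * 1 * ennreal ((w + Y (\<omega> !! Suc i))\<^sup>2 / 2)"
      by (simp add: gap_def distrib_left mult.assoc)
  qed
  also have "\<dots> = (\<integral>\<^sup>+\<omega>. epoch_le T i \<omega> * ennreal (age i \<omega>) * ennreal (w + Y (\<omega> !! Suc i)) \<partial>stream_space M)
      + (\<integral>\<^sup>+\<omega>. epoch_le T i \<omega> * 1 * ennreal ((w + Y (\<omega> !! Suc i))\<^sup>2 / 2) \<partial>stream_space M)"
    by (rule nn_integral_add) measurable
  also have "\<dots> = (\<integral>\<^sup>+\<omega>. epoch_le T i \<omega> * ennreal (age i \<omega>) \<partial>stream_space M) * ennreal (w + \<mu>)
      + (\<integral>\<^sup>+\<omega>. epoch_le T i \<omega> \<partial>stream_space M) * ennreal (s / 2)"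
    unfolding nn_integral_gap[symmetric] nn_integral_gap_sq_half[symmetric]
    by (subst (1 2) nn_integral_epoch_le_indep) (auto dest: age_prefix)
  finally show ?thesis .
qed

(* Weakening epoch (Suc j) <= T to epoch j <= T decouples the indicator from age (Suc j). *)

lemma nn_integral_epoch_le_age_Suc:
  "(\<integral>\<^sup>+\<omega>. epoch_le T (Suc j) \<omega> * ennreal (age (Suc j) \<omega>) \<partial>stream_space M)
    \<le> (\<integral>\<^sup>+\<omega>. epoch_le T j \<omega> \<partial>stream_space M) * ennreal \<mu>"
proof -
  have "(\<integral>\<^sup>+\<omega>. epoch_le T (Suc j) \<omega> * ennreal (age (Suc j) \<omega>) \<partial>stream_space M)
      \<le> (\<integral>\<^sup>+\<omega>. epoch_le T j \<omega> * 1 * ennreal (Y (\<omega> !! Suc j)) \<partial>stream_space M)"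
    unfolding age_def using epoch_le_antimono by (auto intro!: nn_integral_mono mult_right_mono)
  also have "\<dots> = (\<integral>\<^sup>+\<omega>. epoch_le T j \<omega> \<partial>stream_space M) * ennreal \<mu>"
    unfolding nn_integral_Y[symmetric] by (subst nn_integral_epoch_le_indep) auto
  finally show ?thesis .
qed

lemma expected_area_le:
  "(\<integral>\<^sup>+\<omega>. (\<Sum>i<horizon T. epoch_le T i \<omega> * ennreal (age i \<omega> * gap i \<omega> + (gap i \<omega>)\<^sup>2 / 2))
       \<partial>stream_space M)
    \<le> renewal_count T * ennreal (\<mu> * (w + \<mu>) + s / 2)"
proof -
  define b where "b i = (\<integral>\<^sup>+\<omega>. epoch_le T i \<omega> \<partial>stream_space M)" for i
  define x where "x i = (\<integral>\<^sup>+\<omega>. epoch_le T i \<omega> * ennreal (age i \<omega>) \<partial>stream_space M)" for i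
  have "(\<integral>\<^sup>+\<omega>. (\<Sum>i<horizon T. epoch_le T i \<omega> * ennreal (age i \<omega> * gap i \<omega> + (gap i \<omega>)\<^sup>2 / 2))
       \<partial>stream_space M)
     = (\<Sum>i<horizon T. x i) * ennreal (w + \<mu>) + (\<Sum>i<horizon T. b i) * ennreal (s / 2)"
    unfolding x_def b_def
    by (subst nn_integral_sum) (auto simp: nn_integral_epoch_le_area sum.distrib sum_distrib_right)
  also have "\<dots> \<le> (\<Sum>i<horizon T. b i * ennreal \<mu>) * ennreal (w + \<mu>) + (\<Sum>i<horizon T. b i) * ennreal (s / 2)"
  proof -
    have "(\<Sum>i<horizon T. x i) \<le> (\<Sum>i<horizon T. b i * ennreal \<mu>)"
      unfolding x_def b_def
      by (rule sum_lessThan_le_shifted) (simp add: age_def, rule nn_integral_epoch_le_age_Suc, simp)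
    then show ?thesis by (intro add_mono mult_right_mono) auto
  qed
  also have "\<dots> = renewal_count T * ennreal (\<mu> * (w + \<mu>) + s / 2)"
    using \<mu>_nonneg w_pos s_nonneg
    by (simp add: renewal_count_def b_def sum_distrib_right distrib_left ennreal_mult ennreal_plus mult.assoc)
  finally show ?thesis .
qed

(* Wald's identity applied to the pathwise bound sum_until_passage_le. *)

lemma renewal_inequality:
  assumes T: "0 \<le> T" and \<epsilon>: "0 < \<epsilon>"
  shows "renewal_count T * ennreal (w + \<mu>)
      \<le> ennreal T + ennreal \<epsilon> * (renewal_count T * ennreal s) + ennreal (1 / (4 * \<epsilon>))"
proof -
  interpret S: prob_space "stream_space M" by (rule prob_space_stream_space)
  define n where "n = horizon T"
  define G1 where "G1 \<omega> = (\<Sum>i<n. epoch_le T i \<omega> * ennreal (gap i \<omega>))" for \<omega>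
  define G2 where "G2 \<omega> = (\<Sum>i<n. epoch_le T i \<omega> * ennreal ((gap i \<omega>)\<^sup>2))" for \<omega>
  have indep: "(\<integral>\<^sup>+\<omega>. epoch_le T i \<omega> * h (\<omega> !! Suc i) \<partial>stream_space M)
      = (\<integral>\<^sup>+\<omega>. epoch_le T i \<omega> \<partial>stream_space M) * (\<integral>\<^sup>+x. h x \<partial>M)"
    if "h \<in> borel_measurable M" for h i
    using nn_integral_epoch_le_indep[of "\<lambda>_. 1" i h T] that by simp
  have mean_G1: "(\<integral>\<^sup>+\<omega>. G1 \<omega> \<partial>stream_space M) = renewal_count T * ennreal (w + \<mu>)"
  proof -
    have "(\<integral>\<^sup>+\<omega>. G1 \<omega> \<partial>stream_space M)
        = (\<Sum>i<n. \<integral>\<^sup>+\<omega>. epoch_le T i \<omega> * ennreal (w + Y (\<omega> !! Suc i)) \<partial>stream_space M)"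
      unfolding G1_def gap_def by (rule nn_integral_sum) measurable
    also have "\<dots> = (\<Sum>i<n. (\<integral>\<^sup>+\<omega>. epoch_le T i \<omega> \<partial>stream_space M) * ennreal (w + \<mu>))"
      unfolding nn_integral_gap[symmetric] by (intro sum.cong refl indep) measurable
    finally show ?thesis by (simp add: renewal_count_def n_def sum_distrib_right)
  qed
  have mean_G2: "(\<integral>\<^sup>+\<omega>. G2 \<omega> \<partial>stream_space M) = renewal_count T * ennreal s"
  proof -
    have "(\<integral>\<^sup>+\<omega>. G2 \<omega> \<partial>stream_space M)
        = (\<Sum>i<n. \<integral>\<^sup>+\<omega>. epoch_le T i \<omega> * ennreal ((w + Y (\<omega> !! Suc i))\<^sup>2) \<partial>stream_space M)"
      unfolding G2_def gap_def by (rule nn_integral_sum) measurable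
    also have "\<dots> = (\<Sum>i<n. (\<integral>\<^sup>+\<omega>. epoch_le T i \<omega> \<partial>stream_space M) * ennreal s)"
      unfolding nn_integral_gap_sq[symmetric] by (intro sum.cong refl indep) measurable
    finally show ?thesis by (simp add: renewal_count_def n_def sum_distrib_right)
  qed
  have pathwise: "G1 \<omega> \<le> ennreal T + ennreal \<epsilon> * G2 \<omega> + ennreal (1 / (4 * \<epsilon>))" for \<omega>
  proof -
    define Q where "Q = (\<Sum>i<n. if epoch i \<omega> \<le> T then (gap i \<omega>)\<^sup>2 else 0)"
    have "G1 \<omega> = ennreal (\<Sum>i<n. if epoch i \<omega> \<le> T then gap i \<omega> else 0)"
      unfolding G1_def epoch_le_mult using gap_nonneg by (subst sum_ennreal) auto
    also have "\<dots> \<le> ennreal (T + \<epsilon> * Q + 1 / (4 * \<epsilon>))"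
      unfolding Q_def epoch_def using sum_until_passage_le[OF gap_nonneg T \<epsilon>] by (rule ennreal_leI)
    also have "\<dots> = ennreal T + ennreal \<epsilon> * G2 \<omega> + ennreal (1 / (4 * \<epsilon>))"
    proof -
      have "G2 \<omega> = ennreal Q"
        unfolding G2_def Q_def epoch_le_mult by (subst sum_ennreal) auto
      moreover have "0 \<le> Q" unfolding Q_def by (intro sum_nonneg) auto
      ultimately show ?thesis using T \<epsilon> by (simp add: ennreal_plus ennreal_mult)
    qed
    finally show ?thesis .
  qed
  have "renewal_count T * ennreal (w + \<mu>) \<le> (\<integral>\<^sup>+\<omega>. ennreal T + ennreal \<epsilon> * G2 \<omega> + ennreal (1 / (4 * \<epsilon>)) \<partial>stream_space M)"
    unfolding mean_G1[symmetric] by (intro nn_integral_mono pathwise)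
  also have "\<dots> = ennreal T + ennreal \<epsilon> * (renewal_count T * ennreal s) + ennreal (1 / (4 * \<epsilon>))"
    unfolding G2_def by (simp add: nn_integral_add nn_integral_cmult S.emeasure_space_1 mean_G2[unfolded G2_def])
  finally show ?thesis .
qed

lemma renewal_count_finite: "renewal_count T < \<infinity>"
proof -
  interpret S: prob_space "stream_space M" by (rule prob_space_stream_space)
  have "renewal_count T \<le> (\<Sum>i<horizon T. \<integral>\<^sup>+\<omega>. 1 \<partial>stream_space M)"
    unfolding renewal_count_def by (intro sum_mono nn_integral_mono) (simp add: epoch_le_def)
  then show ?thesis by (simp add: S.emeasure_space_1 le_less_trans[OF _ of_nat_less_top])
qed

(* renewal_inequality with \<epsilon> = 1 / sqrt T, which makes both error terms O(sqrt T). *)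

lemma renewal_count_div_le:
  assumes T: "max 1 ((s / (w + \<mu>) + 1)\<^sup>2) \<le> T"
  shows "renewal_count T / ennreal T
      \<le> ennreal ((1 + inverse (sqrt T) / 4) / (w + \<mu> - s * inverse (sqrt T)))"
proof -
  define m where "m = w + \<mu>"
  define r where "r = sqrt T"
  define u where "u = enn2real (renewal_count T)"
  have m: "0 < m" unfolding m_def using w_pos \<mu>_nonneg by simp
  have r: "0 < r" "s / m + 1 \<le> r" "T = r\<^sup>2"
    using T by (auto simp: r_def m_def intro: real_le_rsqrt)
  have u: "0 \<le> u" "renewal_count T = ennreal u"
    using renewal_count_finite[of T] by (auto simp: u_def)
  have "ennreal (u * m) \<le> ennreal (T + u * s / r + r / 4)"
  proof -
    have "ennreal (u * m) = renewal_count T * ennreal (w + \<mu>)"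
      using u m by (simp add: m_def ennreal_mult)
    also have "\<dots> \<le> ennreal T + ennreal (1 / r) * (renewal_count T * ennreal s) + ennreal (1 / (4 * (1 / r)))"
      using r T by (intro renewal_inequality) auto
    also have "ennreal (1 / r) * (renewal_count T * ennreal s) = ennreal (u * s / r)"
      using u r s_nonneg by (simp add: ennreal_mult[symmetric])
    also have "ennreal T + ennreal (u * s / r) + ennreal (1 / (4 * (1 / r))) = ennreal (T + u * s / r + r / 4)"
      using u r s_nonneg T by (simp add: ennreal_plus)
    finally show ?thesis .
  qed
  then have H: "u * m \<le> r\<^sup>2 + u * s / r + r / 4"
    using u r s_nonneg by (subst (asm) ennreal_le_iff) auto
  have "s < m * r" using r m by (simp add: field_simps)
  then have d: "0 < m - s / r" using r by (simp add: field_simps)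
  have "u * (m - s / r) \<le> r\<^sup>2 + r / 4" using H r by (simp add: field_simps)
  then have "u \<le> (r\<^sup>2 + r / 4) / (m - s / r)" using d by (simp add: pos_le_divide_eq)
  then have "u / T \<le> (r\<^sup>2 + r / 4) / (m - s / r) / r\<^sup>2" unfolding r(3) by (rule divide_right_mono) simp
  also have "\<dots> = (1 + inverse r / 4) / (m - s * inverse r)"
    using r d by (simp add: field_simps power2_eq_square)
  finally have "u / T \<le> (1 + inverse (sqrt T) / 4) / (w + \<mu> - s * inverse (sqrt T))"
    by (simp only: m_def r_def)
  then show ?thesis
    using u T by (simp add: divide_ennreal ennreal_leI)
qed

lemma Limsup_div_le_renewal:
  assumes c: "0 \<le> c" and F: "eventually (\<lambda>T. F T \<le> renewal_count T * ennreal c) at_top"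
  shows "Limsup at_top (\<lambda>T. F T / ennreal T) \<le> ennreal (c / (w + \<mu>))"
proof -
  define g where "g T = c * ((1 + inverse (sqrt T) / 4) / (w + \<mu> - s * inverse (sqrt T)))" for T
  have "(g \<longlongrightarrow> c * ((1 + 0 / 4) / (w + \<mu> - s * 0))) at_top"
    unfolding g_def using w_pos \<mu>_nonneg
    by (intro tendsto_intros tendsto_inverse_0_at_top[OF sqrt_at_top]) auto
  then have g: "(g \<longlongrightarrow> c / (w + \<mu>)) at_top" by simp
  have "eventually (\<lambda>T. F T / ennreal T \<le> ennreal (g T)) at_top"
    using F eventually_ge_at_top[of "max 1 ((s / (w + \<mu>) + 1)\<^sup>2)"]
  proof eventually_elim
    case (elim T)
    have "F T / ennreal T \<le> renewal_count T / ennreal T * ennreal c"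
      using divide_right_mono_ennreal[OF elim(1)] by (simp add: ennreal_times_divide mult.commute)
    also have "\<dots> \<le> ennreal ((1 + inverse (sqrt T) / 4) / (w + \<mu> - s * inverse (sqrt T))) * ennreal c"
      by (rule mult_right_mono[OF renewal_count_div_le[OF elim(2)]]) simp
    also have "\<dots> = ennreal (g T)"
      unfolding g_def using c by (simp add: ennreal_mult'[symmetric] mult.commute)
    finally show ?case .
  qed
  then have "Limsup at_top (\<lambda>T. F T / ennreal T) \<le> Limsup at_top (\<lambda>T. ennreal (g T))"
    by (rule Limsup_mono)
  also have "\<dots> = ennreal (c / (w + \<mu>))"
    by (intro lim_imp_Limsup tendsto_ennrealI g) simp
  finally show ?thesis .
qed

end

section \<open>The fixed-route policy\<close>

definition fixed_route_policy :: "'r \<Rightarrow> real \<Rightarrow> 'r policy" where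
  "fixed_route_policy k w = (\<lambda>_ a. (if a k then k else (SOME j. a j), w))"

lemma admissible_fixed_route_policy: "0 \<le> w \<Longrightarrow> admissible (fixed_route_policy k w)"
  unfolding admissible_def fixed_route_policy_def by (auto intro: someI_ex)

lemma samp_eq_deliv_minus_lastdelay: "samp \<pi> A Y \<omega> i = deliv \<pi> A Y \<omega> i - lastdelay \<pi> A Y \<omega> i"
  by (cases i) auto

locale fixed_route = prob_space M for M :: "'e measure" +
  fixes A :: "'e \<Rightarrow> 'r \<Rightarrow> bool" and Y :: "'e \<Rightarrow> 'r \<Rightarrow> real" and k :: 'r and \<mu> \<sigma> w :: real
  assumes A_measurable[measurable]: "(\<lambda>e. A e k) \<in> measurable M (count_space UNIV)"
    and AE_available: "AE e in M. A e k"
    and Y_measurable[measurable]: "(\<lambda>e. Y e k) \<in> borel_measurable M"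
    and Y_nonneg: "AE e in M. 0 \<le> Y e k"
    and Y_integrable: "integrable M (\<lambda>e. Y e k)"
    and Y_sq_integrable: "integrable M (\<lambda>e. (Y e k)\<^sup>2)"
    and Y_mean: "expectation (\<lambda>e. Y e k) = \<mu>"
    and Y_variance: "variance (\<lambda>e. Y e k) = \<sigma>\<^sup>2"
    and w_pos: "0 < w"
begin

lemma nn_integral_Y: "(\<integral>\<^sup>+e. ennreal (Y e k) \<partial>M) = ennreal \<mu>"
  using nn_integral_eq_integral[OF Y_integrable Y_nonneg] Y_mean by simp

lemma nn_integral_gap_sq:
  "(\<integral>\<^sup>+e. ennreal ((w + max 0 (Y e k))\<^sup>2) \<partial>M) = ennreal ((w + \<mu>)\<^sup>2 + \<sigma>\<^sup>2)"
proof -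
  have square_integrable: "integrable M (\<lambda>e. w\<^sup>2 + 2 * w * Y e k + (Y e k)\<^sup>2)"
    using Y_integrable Y_sq_integrable by auto
  have "(\<integral>\<^sup>+e. ennreal ((w + max 0 (Y e k))\<^sup>2) \<partial>M) = (\<integral>\<^sup>+e. ennreal (w\<^sup>2 + 2 * w * Y e k + (Y e k)\<^sup>2) \<partial>M)"
    by (intro nn_integral_cong_AE) (use Y_nonneg in \<open>eventually_elim, simp add: power2_sum algebra_simps\<close>)
  also have "\<dots> = ennreal (\<integral>e. w\<^sup>2 + 2 * w * Y e k + (Y e k)\<^sup>2 \<partial>M)"
  proof (intro nn_integral_eq_integral[OF square_integrable] AE_I2)
    fix e
    have "w\<^sup>2 + 2 * w * Y e k + (Y e k)\<^sup>2 = (w + Y e k)\<^sup>2" by (simp add: power2_sum)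
    then show "0 \<le> w\<^sup>2 + 2 * w * Y e k + (Y e k)\<^sup>2" by simp
  qed
  also have "(\<integral>e. w\<^sup>2 + 2 * w * Y e k + (Y e k)\<^sup>2 \<partial>M) = w\<^sup>2 + 2 * w * \<mu> + (\<sigma>\<^sup>2 + \<mu>\<^sup>2)"
  proof -
    have "(\<integral>e. (Y e k)\<^sup>2 \<partial>M) = \<sigma>\<^sup>2 + \<mu>\<^sup>2"
      using variance_eq[OF Y_integrable Y_sq_integrable] Y_variance Y_mean by simp
    then show ?thesis using Y_integrable Y_sq_integrable Y_mean by (simp add: prob_space)
  qed
  finally show ?thesis by (simp add: power2_sum algebra_simps)
qed

sublocale renewal: wait_renewal M "\<lambda>e. max 0 (Y e k)" w \<mu> "(w + \<mu>)\<^sup>2 + \<sigma>\<^sup>2"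
  using w_pos integral_nonneg_AE[OF Y_nonneg] Y_mean nn_integral_Y nn_integral_gap_sq
  by unfold_locales auto

abbreviation policy :: "'r policy" where
  "policy \<equiv> fixed_route_policy k w"

definition good_path :: "'e stream \<Rightarrow> bool" where
  "good_path = stream_all (\<lambda>e. A e k \<and> 0 \<le> Y e k)"

lemma AE_good_path: "AE \<omega> in stream_space M. good_path \<omega>"
  unfolding good_path_def
  by (rule AE_stream_all) (use AE_available Y_nonneg in \<open>measurable, eventually_elim, simp\<close>)

lemma good_path_dynamics:
  assumes "good_path \<omega>"
  shows "route policy A Y \<omega> i = k" "wait policy A Y \<omega> i = w"
    and "lastdelay policy A Y \<omega> i = renewal.age i \<omega>" "deliv policy A Y \<omega> i = renewal.epoch i \<omega>"
proof -
  have available: "A (\<omega> !! i) k" and delay: "max 0 (Y (\<omega> !! i) k) = Y (\<omega> !! i) k" for i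
    using assms unfolding good_path_def stream_all_def by auto
  show route: "route policy A Y \<omega> i = k" for i
    using available by (simp add: route_def fixed_route_policy_def)
  show wait: "wait policy A Y \<omega> i = w" for i
    by (simp add: wait_def fixed_route_policy_def)
  show lastdelay: "lastdelay policy A Y \<omega> i = renewal.age i \<omega>" for i
    using route[unfolded route_def] delay by (cases i) (simp_all add: renewal.age_def del: snth.simps)
  show "deliv policy A Y \<omega> i = renewal.epoch i \<omega>"
    by (induction i) (simp_all add: wait lastdelay renewal.epoch_Suc renewal.gap_def renewal.age_def
        renewal.epoch_def del: lastdelay.simps snth.simps)
qed

lemma nn_integral_energy:
  assumes Cs: "0 \<le> Cs" and G: "0 \<le> G k"
  shows "(\<integral>\<^sup>+\<omega>. (\<Sum>i<n. ennreal (Cs + G (route policy A Y \<omega> i) * lastdelay policy A Y \<omega> (Suc i)))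
      \<partial>stream_space M) = of_nat n * ennreal (Cs + G k * \<mu>)"
proof -
  have "(\<integral>\<^sup>+\<omega>. (\<Sum>i<n. ennreal (Cs + G (route policy A Y \<omega> i) * lastdelay policy A Y \<omega> (Suc i)))
      \<partial>stream_space M)
    = (\<integral>\<^sup>+\<omega>. (\<Sum>i<n. ennreal Cs + ennreal (G k) * ennreal (max 0 (Y (\<omega> !! Suc i) k))) \<partial>stream_space M)"
    by (intro nn_integral_cong_AE) (use AE_good_path in \<open>eventually_elim, simp add: Cs G
        good_path_dynamics renewal.age_def ennreal_plus ennreal_mult del: snth.simps lastdelay.simps\<close>)
  also have "\<dots> = of_nat n * (ennreal Cs + ennreal (G k) * ennreal \<mu>)"
    by (subst nn_integral_stream_space_sum_snth) (auto simp: nn_integral_add nn_integral_cmult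
        nn_integral_Y emeasure_space_1)
  finally show ?thesis using Cs G renewal.\<mu>_nonneg by (simp add: ennreal_plus ennreal_mult)
qed

lemma nn_integral_elapsed_time:
  "(\<integral>\<^sup>+\<omega>. (\<Sum>i<n. ennreal (wait policy A Y \<omega> i + lastdelay policy A Y \<omega> (Suc i))) \<partial>stream_space M)
    = of_nat n * ennreal (w + \<mu>)"
proof -
  have "(\<integral>\<^sup>+\<omega>. (\<Sum>i<n. ennreal (wait policy A Y \<omega> i + lastdelay policy A Y \<omega> (Suc i))) \<partial>stream_space M)
    = (\<integral>\<^sup>+\<omega>. (\<Sum>i<n. ennreal (w + max 0 (Y (\<omega> !! Suc i) k))) \<partial>stream_space M)"
    by (intro nn_integral_cong_AE) (use AE_good_path in \<open>eventually_elim, simp add: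
        good_path_dynamics renewal.age_def del: snth.simps lastdelay.simps\<close>)
  also have "\<dots> = of_nat n * ennreal (w + \<mu>)"
    by (subst nn_integral_stream_space_sum_snth) (auto simp: renewal.nn_integral_gap)
  finally show ?thesis .
qed

lemma avg_power_le:
  assumes "0 \<le> Cs" "0 \<le> G k"
  shows "avg_power M A Y Cs G policy \<le> ennreal ((Cs + G k * \<mu>) / (w + \<mu>))"
  unfolding avg_power_def nn_integral_energy[of Cs G, OF assms] nn_integral_elapsed_time
  using assms w_pos renewal.\<mu>_nonneg
  by (intro Limsup_bounded always_eventually allI of_nat_mult_ennreal_divide_le) auto

lemma aoi_area_le:
  assumes "good_path \<omega>"
  shows "(\<integral>\<^sup>+t. indicator {0..T} t * aoi policy A Y \<omega> t \<partial>lborel)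
    \<le> (\<Sum>i<renewal.horizon T. renewal.epoch_le T i \<omega>
          * ennreal (renewal.age i \<omega> * renewal.gap i \<omega> + (renewal.gap i \<omega>)\<^sup>2 / 2))"
proof -
  note dyn = good_path_dynamics[OF assms]
  have age: "deliv policy A Y \<omega> i - samp policy A Y \<omega> i = renewal.age i \<omega>" for i
    using samp_eq_deliv_minus_lastdelay[of policy A Y \<omega> i] dyn by simp
  have cycle: "deliv policy A Y \<omega> (Suc i) - samp policy A Y \<omega> i = renewal.age i \<omega> + renewal.gap i \<omega>" for i
    using age[of i] dyn(4)[of i] dyn(4)[of "Suc i"] renewal.epoch_Suc[of i \<omega>] by linarith
  have trapezoid: "((a + g)\<^sup>2 - a\<^sup>2) / 2 = a * g + g\<^sup>2 / 2" for a g :: real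
    by (simp add: power2_eq_square algebra_simps)
  have "(\<integral>\<^sup>+t. indicator {0..T} t * aoi policy A Y \<omega> t \<partial>lborel)
    \<le> (\<Sum>i. if deliv policy A Y \<omega> i \<le> T then ennreal (((deliv policy A Y \<omega> (Suc i) - samp policy A Y \<omega> i)\<^sup>2
           - (deliv policy A Y \<omega> i - samp policy A Y \<omega> i)\<^sup>2) / 2) else 0)"
  proof (unfold aoi_def, rule nn_integral_sawtooth_le)
    show "samp policy A Y \<omega> i \<le> deliv policy A Y \<omega> i" for i
      using age[of i] renewal.age_nonneg[of i \<omega>] by linarith
    show "deliv policy A Y \<omega> i \<le> deliv policy A Y \<omega> (Suc i)" for i
      using renewal.epoch_mono[of i \<omega>] by (simp only: dyn)
  qed
  also have "\<dots> = (\<Sum>i. renewal.epoch_le T i \<omega>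
          * ennreal (renewal.age i \<omega> * renewal.gap i \<omega> + (renewal.gap i \<omega>)\<^sup>2 / 2))"
    by (simp only: age cycle trapezoid) (auto simp: dyn renewal.epoch_le_def intro!: suminf_cong)
  also have "\<dots> = (\<Sum>i<renewal.horizon T. renewal.epoch_le T i \<omega>
          * ennreal (renewal.age i \<omega> * renewal.gap i \<omega> + (renewal.gap i \<omega>)\<^sup>2 / 2))"
    by (rule suminf_finite) (auto simp: renewal.epoch_le_beyond_horizon not_less)
  finally show ?thesis .
qed

lemma avg_aoi_le: "avg_aoi M A Y policy \<le> ennreal ((3 * \<mu> + w) / 2 + \<sigma>\<^sup>2 / (2 * (\<mu> + w)))"
proof -
  define c where "c = \<mu> * (w + \<mu>) + ((w + \<mu>)\<^sup>2 + \<sigma>\<^sup>2) / 2"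
  have \<mu>: "0 \<le> \<mu>" by (rule renewal.\<mu>_nonneg)
  have "avg_aoi M A Y policy \<le> ennreal (c / (w + \<mu>))"
    unfolding avg_aoi_def
  proof (rule renewal.Limsup_div_le_renewal)
    show "0 \<le> c" unfolding c_def using \<mu> w_pos by simp
    have "(\<integral>\<^sup>+\<omega>. (\<integral>\<^sup>+t. indicator {0..T} t * aoi policy A Y \<omega> t \<partial>lborel) \<partial>stream_space M)
        \<le> (\<integral>\<^sup>+\<omega>. (\<Sum>i<renewal.horizon T. renewal.epoch_le T i \<omega>
          * ennreal (renewal.age i \<omega> * renewal.gap i \<omega> + (renewal.gap i \<omega>)\<^sup>2 / 2)) \<partial>stream_space M)" for T
      using AE_good_path by (intro nn_integral_mono_AE) (erule eventually_mono, erule aoi_area_le)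
    also have "\<dots> T \<le> renewal.renewal_count T * ennreal c" for T
      unfolding c_def by (rule renewal.expected_area_le)
    finally show "\<forall>\<^sub>F T in at_top. (\<integral>\<^sup>+\<omega>. (\<integral>\<^sup>+t. indicator {0..T} t * aoi policy A Y \<omega> t \<partial>lborel) \<partial>stream_space M)
        \<le> renewal.renewal_count T * ennreal c"
      by simp
  qed
  also have "c / (w + \<mu>) = (3 * \<mu> + w) / 2 + \<sigma>\<^sup>2 / (2 * (\<mu> + w))"
    unfolding c_def using \<mu> w_pos by (simp add: field_simps power2_eq_square)
  finally show ?thesis .
qed

lemma opt_aoi_le:
  assumes "0 \<le> Cs" "0 \<le> G k" "Cs + G k * \<mu> \<le> Emax * (w + \<mu>)"
  shows "opt_aoi M A Y Cs G Emax \<le> ennreal ((3 * \<mu> + w) / 2 + \<sigma>\<^sup>2 / (2 * (\<mu> + w)))"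
proof -
  have "avg_power M A Y Cs G policy \<le> ennreal Emax"
  proof -
    have "(Cs + G k * \<mu>) / (w + \<mu>) \<le> Emax"
      using assms(3) w_pos renewal.\<mu>_nonneg by (simp add: pos_divide_le_eq)
    then show ?thesis
      using avg_power_le[of Cs G] assms(1,2) by (auto intro: order_trans ennreal_leI)
  qed
  moreover have "admissible policy"
    using w_pos by (intro admissible_fixed_route_policy) simp
  ultimately have "opt_aoi M A Y Cs G Emax \<le> avg_aoi M A Y policy"
    unfolding opt_aoi_def by (intro INF_lower) simp
  also note avg_aoi_le
  finally show ?thesis .
qed

end

theorem lemma3:
  fixes M0 :: "'e measure"
    and A :: "'e \<Rightarrow> 'r::finite \<Rightarrow> bool"
    and Y :: "'e \<Rightarrow> 'r \<Rightarrow> real"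
    and p \<mu> \<sigma> G :: "'r \<Rightarrow> real"
    and Cs Emax :: real
  assumes M0: "prob_space M0"
    and A_meas: "\<And>k. (\<lambda>e. A e k) \<in> measurable M0 (count_space UNIV)"
    and p_range: "\<And>k. 0 < p k \<and> p k \<le> 1"
    and p_prob: "\<And>k. measure M0 {e \<in> space M0. A e k} = p k"
    and Rinf_ne: "{k. p k = 1} \<noteq> {}"
    and Y_meas: "\<And>k. (\<lambda>e. Y e k) \<in> borel_measurable M0"
    and Y_nonneg: "\<And>k. AE e in M0. 0 \<le> Y e k"
    and Y_int: "\<And>k. integrable M0 (\<lambda>e. Y e k)"
    and Y_mean: "\<And>k. prob_space.expectation M0 (\<lambda>e. Y e k) = \<mu> k"
    and mu_pos: "\<And>k. 0 < \<mu> k"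
    and Y_sq_int: "\<And>k. integrable M0 (\<lambda>e. (Y e k)\<^sup>2)"
    and Y_var: "\<And>k. prob_space.variance M0 (\<lambda>e. Y e k) = (\<sigma> k)\<^sup>2"
    and Cs_pos: "0 < Cs"
    and G_nonneg: "\<And>k. 0 \<le> G k"
    and Emax_pos: "0 < Emax"
  shows "0 \<le> opt_aoi M0 A Y Cs G Emax \<and>
         opt_aoi M0 A Y Cs G Emax \<le>
           ennreal (Min ((\<lambda>k. let w = max 0 ((Cs + G k * \<mu> k) / Emax - \<mu> k) in
                               (3 * \<mu> k + w) / 2 + (\<sigma> k)\<^sup>2 / (2 * (\<mu> k + w)))
                         ` {k. p k = 1}))"
proof -
  interpret prob_space M0 by (rule M0)
  define F where "F k w = (3 * \<mu> k + w) / 2 + (\<sigma> k)\<^sup>2 / (2 * (\<mu> k + w))" for k w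
  define w_min where "w_min k = max 0 ((Cs + G k * \<mu> k) / Emax - \<mu> k)" for k
  have opt_le: "opt_aoi M0 A Y Cs G Emax \<le> ennreal (F k (w_min k))" if "p k = 1" for k
  proof (rule ennreal_le_of_continuous_from_right[where f = "F k"])
    have "0 < \<mu> k + w_min k"
      using mu_pos[of k] by (simp add: w_min_def add_pos_nonneg)
    then show "isCont (F k) (w_min k)"
      unfolding F_def by (intro continuous_intros) auto
    fix w assume "w_min k < w"
    then have "0 < w" and "Cs + G k * \<mu> k \<le> Emax * (w + \<mu> k)"
      using Emax_pos by (auto simp: w_min_def field_simps)
    moreover have "AE e in M0. A e k"
      using AE_prob_1[of "{e \<in> space M0. A e k}"] p_prob[of k] that A_meas[of k] by auto
    ultimately interpret fixed_route M0 A Y k "\<mu> k" "\<sigma> k" w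
      using A_meas Y_meas Y_nonneg Y_int Y_sq_int Y_mean Y_var by unfold_locales auto
    show "opt_aoi M0 A Y Cs G Emax \<le> ennreal (F k w)"
      unfolding F_def using Cs_pos G_nonneg \<open>Cs + G k * \<mu> k \<le> Emax * (w + \<mu> k)\<close>
      by (intro opt_aoi_le) (auto simp: less_imp_le)
  qed
  have "Min ((\<lambda>k. F k (w_min k)) ` {k. p k = 1}) \<in> (\<lambda>k. F k (w_min k)) ` {k. p k = 1}"
    using Rinf_ne by (intro Min_in) auto
  then obtain k where "p k = 1" and "Min ((\<lambda>k. F k (w_min k)) ` {k. p k = 1}) = F k (w_min k)"
    by auto
  then show ?thesis
    using opt_le by (simp add: F_def w_min_def Let_def)
qed

end
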